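(* Let $q$ be a prime power, $\beta$ a primitive element of $\mathbb{F}_{q^2}$, $\mathrm{Tr}(x)=x+x^q$, and $\Psi:\mathbb{F}_{q^2}^n\to\mathbb{F}_q^{2n}$, $\Psi(\alpha_0,\ldots,\alpha_{n-1})=\left(\mathrm{Tr}(\beta\alpha_0),\ldots,\mathrm{Tr}(\beta\alpha_{n-1}),\mathrm{Tr}(\beta^q\alpha_0),\ldots,\mathrm{Tr}(\beta^q\alpha_{n-1})\right)$. Let $\mathscr{C}$ be an $\mathbb{F}_q$-linear additive conjucyclic code of length $n$ over $\mathbb{F}_{q^2}$, $\mathscr{D}=\Psi(\mathscr{C})$, and $\mathcal{H}(\mathscr{C})$ the largest $q$-ary cyclic code contained in $\mathscr{C}$. Then for any $\vec{d}=(d_0,\ldots,d_{2n-1})\in\mathscr{D}$, $\vec{d}\in\Psi(\mathcal{H}(\mathscr{C}))$ if and only if $d_i=d_{n+i}$ for all $0\leq i\leq n-1$.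
   Context: An $\mathbb{F}_q$-linear additive code of length $n$ over $\mathbb{F}_{q^2}$ is an $\mathbb{F}_q$-subspace of $\mathbb{F}_{q^2}^n$; it is conjucyclic if closed under $T(c_0,\ldots,c_{n-1})=(c_{n-1}^q,c_0,\ldots,c_{n-2})$. A $q$-ary cyclic code of length $n$ is an $\mathbb{F}_q$-subspace of $\mathbb{F}_q^n$ closed under the cyclic shift $(c_0,\ldots,c_{n-1})\mapsto(c_{n-1},c_0,\ldots,c_{n-2})$; here $\mathbb{F}_q^n\subseteq\mathbb{F}_{q^2}^n$. *)

theory Defs
  imports "HOL-Computational_Algebra.Primes"
begin

text \<open>Ambient field F_{q^2} is a finite field type 'a with CARD('a) = q^2.
  The subfield F_q is the fixed field of the Frobenius x \<mapsto> x^q.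
  Vectors of length n are lists of length n.\<close>

definition prime_power :: "nat \<Rightarrow> bool" where
  "prime_power q \<longleftrightarrow> (\<exists>p k. prime p \<and> k > 0 \<and> q = p ^ k)"

definition Fq :: "nat \<Rightarrow> 'a::field set" where
  "Fq q = {x. x ^ q = x}"

definition primitive_element :: "'a::{finite,field} \<Rightarrow> bool" where
  "primitive_element b \<longleftrightarrow> b \<noteq> 0 \<and> (\<forall>x. x \<noteq> 0 \<longrightarrow> (\<exists>k::nat. x = b ^ k))"

definition Tr :: "nat \<Rightarrow> 'a::field \<Rightarrow> 'a" where
  "Tr q x = x + x ^ q"

definition vadd :: "'a::field list \<Rightarrow> 'a list \<Rightarrow> 'a list" where
  "vadd u v = map2 (+) u v"

definition vscale :: "'a::field \<Rightarrow> 'a list \<Rightarrow> 'a list" where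
  "vscale a v = map (\<lambda>x. a * x) v"

definition Fq_linear_code :: "nat \<Rightarrow> nat \<Rightarrow> 'a::field list set \<Rightarrow> bool" where
  "Fq_linear_code q n C \<longleftrightarrow>
     (\<forall>c\<in>C. length c = n) \<and> replicate n 0 \<in> C \<and>
     (\<forall>u\<in>C. \<forall>v\<in>C. vadd u v \<in> C) \<and>
     (\<forall>a\<in>Fq q. \<forall>v\<in>C. vscale a v \<in> C)"

definition conj_shift :: "nat \<Rightarrow> 'a::field list \<Rightarrow> 'a list" where
  "conj_shift q c = (last c) ^ q # butlast c"

definition conjucyclic_code :: "nat \<Rightarrow> nat \<Rightarrow> 'a::field list set \<Rightarrow> bool" where
  "conjucyclic_code q n C \<longleftrightarrow> Fq_linear_code q n C \<and> (\<forall>c\<in>C. conj_shift q c \<in> C)"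

definition cyc_shift :: "'a list \<Rightarrow> 'a list" where
  "cyc_shift c = last c # butlast c"

definition qary_cyclic_code :: "nat \<Rightarrow> nat \<Rightarrow> 'a::field list set \<Rightarrow> bool" where
  "qary_cyclic_code q n D \<longleftrightarrow> Fq_linear_code q n D \<and>
     (\<forall>c\<in>D. set c \<subseteq> Fq q) \<and> (\<forall>c\<in>D. cyc_shift c \<in> D)"

definition H_code :: "nat \<Rightarrow> nat \<Rightarrow> 'a::field list set \<Rightarrow> 'a list set" where
  "H_code q n C = (THE D. qary_cyclic_code q n D \<and> D \<subseteq> C \<and>
      (\<forall>D'. qary_cyclic_code q n D' \<and> D' \<subseteq> C \<longrightarrow> D' \<subseteq> D))"

definition Psi :: "nat \<Rightarrow> 'a::field \<Rightarrow> 'a list \<Rightarrow> 'a list" where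
  "Psi q b v = map (\<lambda>a. Tr q (b * a)) v @ map (\<lambda>a. Tr q (b ^ q * a)) v"

end

theory Submission
  imports Defs "HOL-Number_Theory.Residues"
begin

text \<open>
  On words over \<open>F\<^sub>q\<close> the conjucyclic shift is the cyclic shift, and \<open>F\<^sub>q\<close> is closed under
  addition (the Frobenius map is additive), so \<open>\<H>(C)\<close> is simply the set of codewords with all
  entries in \<open>F\<^sub>q\<close>. On the other hand \<open>Tr(\<beta>a) - Tr(\<beta>\<^sup>qa) = (\<beta> - \<beta>\<^sup>q)(a - a\<^sup>q)\<close> because
  \<open>\<beta>^(q^2) = \<beta>\<close>, and \<open>\<beta> \<notin> F\<^sub>q\<close> since a primitive element has order \<open>q\<^sup>2 - 1 > q - 1\<close>.
  Hence the two halves of \<open>\<Psi>(c)\<close> agree exactly when every entry of \<open>c\<close> lies in \<open>F\<^sub>q\<close>.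
\<close>

lemma prime_power_ge_2:
  assumes "prime_power q"
  shows "2 \<le> q"
proof -
  obtain p k where "prime p" "0 < k" "q = p ^ k"
    using assms unfolding prime_power_def by blast
  moreover from \<open>prime p\<close> have "2 \<le> p"
    by (rule prime_ge_2_nat)
  ultimately show ?thesis
    using self_le_power[of p k] by simp
qed

text \<open>
  The library's \<open>finite_field_power_card_eq_same\<close> requires the class \<open>finite_field\<close>,
  of which the sort \<open>{finite, field}\<close> is not an instance.
\<close>
lemma power_card_UNIV_eq_self:
  fixes x :: "'a :: {finite, field}"
  shows "x ^ card (UNIV :: 'a set) = x"
proof (cases "x = 0")
  case True
  then show ?thesis
    using finite_UNIV_card_ge_0[where ?'a = 'a] by simp
next
  case False
  define N where "N = card (UNIV :: 'a set)"
  define P where "P = (\<Prod>y\<in>UNIV - {0}. y :: 'a)"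
  have "N = Suc (N - 1)"
    using finite_UNIV_card_ge_0[where ?'a = 'a] unfolding N_def by simp
  have "P \<noteq> 0"
    unfolding P_def by simp
  have "x ^ (N - 1) * P = (\<Prod>y\<in>UNIV - {0}. x * y)"
    unfolding P_def N_def by (simp add: prod.distrib)
  also have "\<dots> = P"
    unfolding P_def
    by (rule prod.reindex_bij_witness[of _ "\<lambda>y. y / x" "\<lambda>y. x * y"]) (use False in auto)
  finally have "x ^ (N - 1) = 1"
    using \<open>P \<noteq> 0\<close> by simp
  then have "x ^ N = x"
    by (subst \<open>N = Suc (N - 1)\<close>) simp
  then show ?thesis
    unfolding N_def .
qed

lemma CHAR_eq_if_card_UNIV_prime_power:
  assumes "prime p" and "card (UNIV :: 'a :: {finite, field} set) = p ^ m"
  shows "CHAR('a) = p"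
proof -
  have "prime CHAR('a)"
    by (rule prime_CHAR_semidom) (simp add: finite_imp_CHAR_pos)
  moreover have "CHAR('a) dvd p ^ m"
    using CHAR_dvd_CARD[where ?'a = 'a] assms(2) by simp
  ultimately show ?thesis
    using assms(1) prime_dvd_power primes_dvd_imp_eq by blast
qed

lemma power_prime_power_add:
  fixes x y :: "'a :: {finite, field}"
  assumes "prime_power q" and "card (UNIV :: 'a set) = q ^ r"
  shows "(x + y) ^ q = x ^ q + y ^ q"
proof -
  obtain p k where "prime p" "q = p ^ k"
    using assms(1) unfolding prime_power_def by blast
  moreover have "CHAR('a) = p"
    using \<open>prime p\<close> assms(2) \<open>q = p ^ k\<close>
    by (intro CHAR_eq_if_card_UNIV_prime_power[where m = "k * r"]) (simp_all add: power_mult)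
  ultimately show ?thesis
    by (intro freshmans_dream'[where n = k]) simp_all
qed

lemma Fq_add_closed:
  fixes x y :: "'a :: {finite, field}"
  assumes "prime_power q" and "card (UNIV :: 'a set) = q ^ r" and "x \<in> Fq q" and "y \<in> Fq q"
  shows "x + y \<in> Fq q"
  using assms power_prime_power_add[OF assms(1,2)] unfolding Fq_def by simp

lemma primitive_element_card_UNIV_le:
  fixes b :: "'a :: {finite, field}"
  assumes "primitive_element b" and "b ^ m = 1" and "0 < m"
  shows "card (UNIV :: 'a set) \<le> Suc m"
proof -
  have "UNIV \<subseteq> insert 0 ((\<lambda>k. b ^ k) ` {..<m})"
  proof
    fix x :: 'a
    show "x \<in> insert 0 ((\<lambda>k. b ^ k) ` {..<m})"
    proof (cases "x = 0")
      case False
      then obtain k where "x = b ^ k"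
        using assms(1) unfolding primitive_element_def by blast
      also have "\<dots> = b ^ (m * (k div m) + k mod m)"
        by simp
      also have "\<dots> = (b ^ m) ^ (k div m) * b ^ (k mod m)"
        by (simp only: power_add power_mult)
      finally have "x = b ^ (k mod m)"
        using assms(2) by simp
      then show ?thesis
        using assms(3) by simp
    qed simp
  qed
  then have "card (UNIV :: 'a set) \<le> card (insert 0 ((\<lambda>k. b ^ k) ` {..<m}))"
    by (intro card_mono) auto
  also have "\<dots> \<le> Suc (card ((\<lambda>k. b ^ k) ` {..<m}))"
    by (rule card_insert_le_m1) auto
  also have "\<dots> \<le> Suc m"
    using card_image_le[of "{..<m}" "\<lambda>k. b ^ k"] by simp
  finally show ?thesis .
qed

lemma primitive_element_notin_Fq:
  fixes b :: "'a :: {finite, field}"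
  assumes "primitive_element b" and "2 \<le> q" and "q < card (UNIV :: 'a set)"
  shows "b \<notin> Fq q"
proof
  assume "b \<in> Fq q"
  have "b \<noteq> 0"
    using assms(1) unfolding primitive_element_def by blast
  have "b * b ^ (q - 1) = b * 1"
    using \<open>b \<in> Fq q\<close> assms(2) unfolding Fq_def by (simp flip: power_Suc)
  then have "b ^ (q - 1) = 1"
    using \<open>b \<noteq> 0\<close> by simp
  then have "card (UNIV :: 'a set) \<le> q"
    using primitive_element_card_UNIV_le[OF assms(1)] assms(2) by fastforce
  with assms(3) show False
    by simp
qed

lemma Tr_diff_eq:
  fixes a b :: "'a :: field"
  assumes "(b ^ q) ^ q = b"
  shows "Tr q (b * a) - Tr q (b ^ q * a) = (b - b ^ q) * (a - a ^ q)"
proof -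
  have "Tr q (b * a) - Tr q (b ^ q * a) = b * a + b ^ q * a ^ q - (b ^ q * a + (b ^ q) ^ q * a ^ q)"
    unfolding Tr_def power_mult_distrib ..
  also have "\<dots> = (b - b ^ q) * (a - a ^ q)"
    unfolding assms by (simp add: algebra_simps)
  finally show ?thesis .
qed

lemma Tr_eq_iff_Fq:
  fixes a b :: "'a :: field"
  assumes "(b ^ q) ^ q = b" and "b \<notin> Fq q"
  shows "Tr q (b * a) = Tr q (b ^ q * a) \<longleftrightarrow> a \<in> Fq q"
proof -
  have "b - b ^ q \<noteq> 0"
    using assms(2) unfolding Fq_def by simp
  have "Tr q (b * a) = Tr q (b ^ q * a) \<longleftrightarrow> Tr q (b * a) - Tr q (b ^ q * a) = 0"
    by (rule eq_iff_diff_eq_0)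
  also have "\<dots> \<longleftrightarrow> (b - b ^ q) * (a - a ^ q) = 0"
    by (simp only: Tr_diff_eq[OF assms(1)])
  also have "\<dots> \<longleftrightarrow> a \<in> Fq q"
    using \<open>b - b ^ q \<noteq> 0\<close> unfolding Fq_def by auto
  finally show ?thesis .
qed

lemma Psi_halves_eq_iff:
  fixes b :: "'a :: field"
  assumes "length c = n" and "(b ^ q) ^ q = b" and "b \<notin> Fq q"
  shows "(\<forall>i<n. Psi q b c ! i = Psi q b c ! (n + i)) \<longleftrightarrow> set c \<subseteq> Fq q"
proof -
  have "(\<forall>i<n. Psi q b c ! i = Psi q b c ! (n + i)) \<longleftrightarrow>
        (\<forall>i<n. Tr q (b * c ! i) = Tr q (b ^ q * c ! i))"
    using assms(1) unfolding Psi_def by (simp add: nth_append)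
  also have "\<dots> \<longleftrightarrow> set c \<subseteq> Fq q"
    using assms unfolding subset_eq by (simp add: Tr_eq_iff_Fq all_set_conv_all_nth)
  finally show ?thesis .
qed

lemma conjucyclic_code_length_pos:
  assumes "conjucyclic_code q n C"
  shows "0 < n"
proof (rule ccontr)
  assume "\<not> 0 < n"
  then have "[] \<in> C" and "\<forall>c\<in>C. length c = 0"
    using assms unfolding conjucyclic_code_def Fq_linear_code_def by auto
  moreover have "conj_shift q [] \<in> C"
    using \<open>[] \<in> C\<close> assms unfolding conjucyclic_code_def by blast
  ultimately show False
    unfolding conj_shift_def by fastforce
qed

lemma set_vadd_subset:
  assumes "\<And>x y. x \<in> A \<Longrightarrow> y \<in> A \<Longrightarrow> x + y \<in> A" and "set u \<subseteq> A" and "set v \<subseteq> A"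
  shows "set (vadd u v) \<subseteq> A"
proof
  fix z
  assume "z \<in> set (vadd u v)"
  then obtain x y where "(x, y) \<in> set (zip u v)" and "z = x + y"
    unfolding vadd_def by auto
  then show "z \<in> A"
    using assms by (blast dest: set_zip_leftD set_zip_rightD)
qed

lemma qary_cyclic_code_Fq_codewords:
  fixes C :: "'a :: field list set"
  assumes "conjucyclic_code q n C" and "0 < q"
    and Fq_add: "\<And>x y :: 'a. x \<in> Fq q \<Longrightarrow> y \<in> Fq q \<Longrightarrow> x + y \<in> Fq q"
  shows "qary_cyclic_code q n {c \<in> C. set c \<subseteq> Fq q}"
  unfolding qary_cyclic_code_def Fq_linear_code_def
proof (intro conjI ballI)
  have lin: "Fq_linear_code q n C" and shift: "\<And>c. c \<in> C \<Longrightarrow> conj_shift q c \<in> C"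
    using assms(1) unfolding conjucyclic_code_def by auto
  then show "length c = n" if "c \<in> {c \<in> C. set c \<subseteq> Fq q}" for c
    using that unfolding Fq_linear_code_def by auto
  show "replicate n 0 \<in> {c \<in> C. set c \<subseteq> Fq q}"
    using lin assms(2) unfolding Fq_linear_code_def Fq_def by auto
  show "vadd u v \<in> {c \<in> C. set c \<subseteq> Fq q}"
    if "u \<in> {c \<in> C. set c \<subseteq> Fq q}" and "v \<in> {c \<in> C. set c \<subseteq> Fq q}" for u v
    using that lin set_vadd_subset[OF Fq_add, of u v] unfolding Fq_linear_code_def by simp
  show "vscale a v \<in> {c \<in> C. set c \<subseteq> Fq q}"
    if "a \<in> Fq q" and "v \<in> {c \<in> C. set c \<subseteq> Fq q}" for a v
    using that lin unfolding Fq_linear_code_def vscale_def Fq_def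
    by (auto simp: power_mult_distrib)
  show "set c \<subseteq> Fq q" if "c \<in> {c \<in> C. set c \<subseteq> Fq q}" for c
    using that by simp
  show "cyc_shift c \<in> {c \<in> C. set c \<subseteq> Fq q}" if c: "c \<in> {c \<in> C. set c \<subseteq> Fq q}" for c
  proof -
    have "c \<noteq> []"
      using c lin conjucyclic_code_length_pos[OF assms(1)] unfolding Fq_linear_code_def by auto
    then have "last c \<in> Fq q"
      using c by auto
    then have "cyc_shift c = conj_shift q c"
      unfolding cyc_shift_def conj_shift_def Fq_def by simp
    moreover have "set (cyc_shift c) \<subseteq> Fq q"
      using c \<open>last c \<in> Fq q\<close> unfolding cyc_shift_def by (auto dest: in_set_butlastD)
    ultimately show ?thesis
      using c shift by simp
  qed
qed

lemma H_code_eqI: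
  assumes "qary_cyclic_code q n D" and "D \<subseteq> C"
    and "\<And>D'. qary_cyclic_code q n D' \<Longrightarrow> D' \<subseteq> C \<Longrightarrow> D' \<subseteq> D"
  shows "H_code q n C = D"
  unfolding H_code_def using assms by (intro the_equality) (auto intro: subset_antisym)

lemma H_code_conjucyclic:
  fixes C :: "'a :: field list set"
  assumes "conjucyclic_code q n C" and "0 < q"
    and "\<And>x y :: 'a. x \<in> Fq q \<Longrightarrow> y \<in> Fq q \<Longrightarrow> x + y \<in> Fq q"
  shows "H_code q n C = {c \<in> C. set c \<subseteq> Fq q}"
  using qary_cyclic_code_Fq_codewords[OF assms]
  by (intro H_code_eqI) (auto simp: qary_cyclic_code_def)

theorem theorem3p14:
  fixes q n :: nat and \<beta> :: "'a::{finite,field}" and C :: "'a list set" and d :: "'a list"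
  assumes "prime_power q"
    and "card (UNIV :: 'a set) = q ^ 2"
    and "primitive_element \<beta>"
    and "conjucyclic_code q n C"
    and "d \<in> Psi q \<beta> ` C"
  shows "d \<in> Psi q \<beta> ` H_code q n C \<longleftrightarrow> (\<forall>i<n. d ! i = d ! (n + i))"
proof -
  have "2 \<le> q"
    using assms(1) by (rule prime_power_ge_2)
  have H: "H_code q n C = {c \<in> C. set c \<subseteq> Fq q}"
    using assms(1,2,4) \<open>2 \<le> q\<close> by (intro H_code_conjucyclic) (auto intro: Fq_add_closed)
  have "(\<beta> ^ q) ^ q = \<beta>"
    using power_card_UNIV_eq_self[of \<beta>] assms(2) by (simp flip: power_mult add: power2_eq_square)
  moreover have "\<beta> \<notin> Fq q"
    using assms(2,3) \<open>2 \<le> q\<close> by (intro primitive_element_notin_Fq) (auto simp: power2_eq_square)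
  ultimately have halves: "(\<forall>i<n. Psi q \<beta> c ! i = Psi q \<beta> c ! (n + i)) \<longleftrightarrow> set c \<subseteq> Fq q"
    if "c \<in> C" for c
    using that assms(4)
    by (intro Psi_halves_eq_iff) (auto simp: conjucyclic_code_def Fq_linear_code_def)
  obtain c where "c \<in> C" and "d = Psi q \<beta> c"
    using assms(5) by blast
  show ?thesis
  proof
    assume "d \<in> Psi q \<beta> ` H_code q n C"
    then obtain h where "h \<in> C" and "set h \<subseteq> Fq q" and "d = Psi q \<beta> h"
      unfolding H by blast
    then show "\<forall>i<n. d ! i = d ! (n + i)"
      using halves[OF \<open>h \<in> C\<close>] by simp
  next
    assume "\<forall>i<n. d ! i = d ! (n + i)"
    then have "set c \<subseteq> Fq q"
      using halves[OF \<open>c \<in> C\<close>] \<open>d = Psi q \<beta> c\<close> by simp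
    then show "d \<in> Psi q \<beta> ` H_code q n C"
      unfolding H using \<open>c \<in> C\<close> \<open>d = Psi q \<beta> c\<close> by blast
  qed
qed

end
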